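(* Let $\tau$ be a uniformly random permutation of $\{1,\dots,n\}$ and let $S_n$ be the number of steps of the greedy walk from $1$ to $n$ in $G_n$ (as in the context). For every $\varepsilon>0$, \[ \mathbb{P}\bigl((2-\varepsilon)\log n\le S_n\le(2+\varepsilon)\log n\bigr)\to1\quad\text{as } n\to\infty, \] where $\log$ is the natural logarithm.
   Context: Vertices $V=\{1,\dots,n\}\subset\mathbb{Z}$. A permutation $\tau$ of $V$ gives insertion times: vertex $x$ is inserted at time $\tau(x)$. The undirected graph $G_n$ on $V$ is built as follows: start with no edges; for $t=1,\dots,n$, let $x$ be the vertex with $\tau(x)=t$; if some $y<x$ with $\tau(y)<t$ exists, add an edge between $x$ and the largest such $y$; if some $y>x$ with $\tau(y)<t$ exists, add an edge between $x$ and the smallest such $y$. The greedy walk toward target $n$ starts at $x_0=1$ and, from the current vertex $x\ne n$, moves to the neighbor $y$ of $x$ minimizing $|y-n|$, stopping at $n$; $S_n$ is its number of moves. *)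

theory Defs
  imports Complex_Main "HOL-Combinatorics.Permutations"
begin

text \<open>Vertices are 1..n (as naturals). tau x is the insertion time of x;
  tau permutes {1..n}.\<close>

definition attach :: "(nat \<Rightarrow> nat) \<Rightarrow> nat \<Rightarrow> nat \<Rightarrow> nat \<Rightarrow> bool" where
  "attach tau n x y \<longleftrightarrow> x \<in> {1..n} \<and>
     ((\<exists>z\<in>{1..n}. z < x \<and> tau z < tau x) \<and>
        y = Max {z\<in>{1..n}. z < x \<and> tau z < tau x}
    \<or> (\<exists>z\<in>{1..n}. x < z \<and> tau z < tau x) \<and>
        y = Min {z\<in>{1..n}. x < z \<and> tau z < tau x})"

definition adj :: "(nat \<Rightarrow> nat) \<Rightarrow> nat \<Rightarrow> nat \<Rightarrow> nat \<Rightarrow> bool" where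
  "adj tau n x y \<longleftrightarrow> attach tau n x y \<or> attach tau n y x"

definition greedy_step :: "(nat \<Rightarrow> nat) \<Rightarrow> nat \<Rightarrow> nat \<Rightarrow> nat" where
  "greedy_step tau n x = (ARG_MIN (\<lambda>y. \<bar>int y - int n\<bar>) y. adj tau n x y)"

definition greedy_walk :: "(nat \<Rightarrow> nat) \<Rightarrow> nat \<Rightarrow> nat \<Rightarrow> nat" where
  "greedy_walk tau n k = ((\<lambda>x. if x = n then x else greedy_step tau n x) ^^ k) 1"

definition greedy_steps :: "(nat \<Rightarrow> nat) \<Rightarrow> nat \<Rightarrow> nat" where
  "greedy_steps tau n = (LEAST k. greedy_walk tau n k = n)"

definition perm_prob :: "nat \<Rightarrow> ((nat \<Rightarrow> nat) \<Rightarrow> bool) \<Rightarrow> real" where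
  "perm_prob n P = real (card {tau. tau permutes {1..n} \<and> P tau})
                   / real (card {tau. tau permutes {1..n}})"

end

theory Submission
  imports Defs "HOL-Analysis.Harmonic_Numbers"
begin

(* Call a position k a prefix minimum of tau if tau k < tau j for all j < k, and a suffix
   minimum if tau k < tau j for all j > k.  The greedy walk from 1 visits exactly these
   positions in increasing order: from a prefix minimum x its largest neighbour is the first
   later position inserted before x, and once no such position exists (x is then a suffix
   minimum) its largest neighbour is the next suffix minimum.  Both kinds meet only at the
   global minimum of tau, so S_n = L_n + R_n - 2, where L_n and R_n count prefix and suffix
   minima.  Inserting a new last position into a permutation of {1..n-1} shows that the sum
   of x ^ L_n over all tau is the rising factorial x (x + 1) ... (x + n - 1); reversing the
   positions gives the same for R_n.  A Chernoff bound with base beta then yields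
   P(beta ^ L_n >= beta powr (beta ln n)) <= e^|beta - 1| n^-(beta ln beta - beta + 1),
   so L_n and R_n are both (1 + o(1)) ln n with probability tending to 1. *)

section \<open>The greedy step\<close>

lemma attachD:
  assumes "attach tau n x y"
  shows "x \<in> {1..n} \<and> y \<in> {1..n} \<and> tau y < tau x \<and> (\<forall>w\<in>{min x y<..<max x y}. tau x \<le> tau w)"
proof -
  let ?L = "{z\<in>{1..n}. z < x \<and> tau z < tau x}" and ?R = "{z\<in>{1..n}. x < z \<and> tau z < tau x}"
  have x: "x \<in> {1..n}" using assms unfolding attach_def by blast
  consider "?L \<noteq> {}" "y = Max ?L" | "?R \<noteq> {}" "y = Min ?R"
    using assms unfolding attach_def by blast
  then show ?thesis
  proof cases
    case 1
    have y: "y \<in> ?L" unfolding 1(2) by (rule Max_in) (use 1 in auto)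
    have "tau x \<le> tau w" if "y < w" "w < x" for w
    proof (rule ccontr)
      assume "\<not> tau x \<le> tau w"
      then have "w \<in> ?L" using that x y by auto
      then have "w \<le> y" unfolding 1(2) by (intro Max_ge) auto
      with \<open>y < w\<close> show False by simp
    qed
    then show ?thesis using x y by auto
  next
    case 2
    have y: "y \<in> ?R" unfolding 2(2) by (rule Min_in) (use 2 in auto)
    have "tau x \<le> tau w" if "x < w" "w < y" for w
    proof (rule ccontr)
      assume "\<not> tau x \<le> tau w"
      then have "w \<in> ?R" using that x y by auto
      then have "y \<le> w" unfolding 2(2) by (intro Min_le) auto
      with \<open>w < y\<close> show False by simp
    qed
    then show ?thesis using x y by auto
  qed
qed

lemma attachI:
  assumes "x \<in> {1..n}" "y \<in> {1..n}" "tau y < tau x" "\<forall>w\<in>{min x y<..<max x y}. tau x \<le> tau w"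
  shows "attach tau n x y"
proof -
  from assms(3) consider "y < x" | "x < y" by (cases x y rule: linorder_cases) auto
  then show ?thesis
  proof cases
    case 1
    then have "y = Max {z\<in>{1..n}. z < x \<and> tau z < tau x}"
      using assms by (intro Max_eqI[symmetric]) (auto, meson greaterThanLessThan_iff leD leI)
    then show ?thesis using assms 1 unfolding attach_def by blast
  next
    case 2
    then have "y = Min {z\<in>{1..n}. x < z \<and> tau z < tau x}"
      using assms by (intro Min_eqI[symmetric]) (auto, meson greaterThanLessThan_iff leD leI)
    then show ?thesis using assms 2 unfolding attach_def by blast
  qed
qed

lemma attach_iff:
  "attach tau n x y \<longleftrightarrow> x \<in> {1..n} \<and> y \<in> {1..n} \<and> tau y < tau x \<and>
     (\<forall>w\<in>{min x y<..<max x y}. tau x \<le> tau w)"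
  using attachD attachI by blast

lemma adj_in_vertices: "adj tau n x y \<Longrightarrow> x \<in> {1..n} \<and> y \<in> {1..n}"
  unfolding adj_def attach_iff by blast

lemma adj_between:
  assumes "adj tau n x y" "w \<in> {min x y<..<max x y}"
  shows "max (tau x) (tau y) \<le> tau w"
  using assms unfolding adj_def attach_iff
  by (auto simp: min.commute max.commute; meson dual_order.trans less_imp_le)

lemma greedy_step_eqI:
  assumes "adj tau n x y" "\<And>z. adj tau n x z \<Longrightarrow> z \<le> y" "y \<le> n"
  shows "greedy_step tau n x = y"
  unfolding greedy_step_def
  by (rule arg_minI[where Q = "\<lambda>z. z = y"]) (use assms in fastforce)+

lemma greedy_walk_Suc:
  "greedy_walk tau n (Suc k) =
     (if greedy_walk tau n k = n then n else greedy_step tau n (greedy_walk tau n k))"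
  unfolding greedy_walk_def by simp

lemma greedy_step_first_smaller:
  assumes "x \<in> {1..n}" "y \<in> {x<..n}" "tau y < tau x" "\<forall>w\<in>{x<..<y}. tau x < tau w"
  shows "greedy_step tau n x = y"
proof (rule greedy_step_eqI)
  show "adj tau n x y"
    using assms unfolding adj_def attach_iff by (auto simp: less_imp_le)
  fix z assume "adj tau n x z"
  show "z \<le> y"
  proof (rule ccontr)
    assume "\<not> z \<le> y"
    then have "max (tau x) (tau z) \<le> tau y"
      using adj_between[OF \<open>adj tau n x z\<close>, of y] assms(2) by simp
    with assms(3) show False by simp
  qed
qed (use assms in simp)

section \<open>The greedy walk visits the prefix and suffix minima\<close>

definition prefix_minima :: "(nat \<Rightarrow> nat) \<Rightarrow> nat \<Rightarrow> nat set" where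
  "prefix_minima tau n = {k\<in>{1..n}. \<forall>j\<in>{1..<k}. tau k < tau j}"

definition suffix_minima :: "(nat \<Rightarrow> nat) \<Rightarrow> nat \<Rightarrow> nat set" where
  "suffix_minima tau n = {k\<in>{1..n}. \<forall>j\<in>{k<..n}. tau k < tau j}"

definition records :: "(nat \<Rightarrow> nat) \<Rightarrow> nat \<Rightarrow> nat set" where
  "records tau n = prefix_minima tau n \<union> suffix_minima tau n"

lemma records_subset: "records tau n \<subseteq> {1..n}"
  unfolding records_def prefix_minima_def suffix_minima_def by auto

lemma finite_records: "finite (records tau n)"
  using records_subset finite_subset by blast

lemma first_in_records: "n \<ge> 1 \<Longrightarrow> 1 \<in> records tau n"
  unfolding records_def prefix_minima_def by simp

lemma last_in_records: "n \<ge> 1 \<Longrightarrow> n \<in> records tau n"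
  unfolding records_def suffix_minima_def by simp

lemma card_less_eq_card_minus_one_iff:
  fixes x :: "'a::linorder"
  assumes "finite M" "x \<in> M"
  shows "card {w\<in>M. w < x} = card M - 1 \<longleftrightarrow> (\<forall>w\<in>M. w \<le> x)"
proof -
  have sub: "{w\<in>M. w < x} \<subseteq> M - {x}" and card: "card (M - {x}) = card M - 1"
    using assms by auto
  have "card {w\<in>M. w < x} = card M - 1 \<longleftrightarrow> {w\<in>M. w < x} = M - {x}"
  proof
    assume "card {w\<in>M. w < x} = card M - 1"
    then show "{w\<in>M. w < x} = M - {x}" using card_subset_eq[OF _ sub] assms(1) card by simp
  qed (use card in simp)
  also have "\<dots> \<longleftrightarrow> (\<forall>w\<in>M. w \<le> x)"
    by (auto simp: le_less)
  finally show ?thesis .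
qed

lemma next_record_prefix_minimum:
  assumes "x \<in> prefix_minima tau n" "y \<in> {x<..n}" "tau y < tau x" "\<forall>w\<in>{x<..<y}. tau x < tau w"
  shows "y \<in> records tau n" "{x<..<y} \<inter> records tau n = {}"
proof -
  have "tau x < tau j" if "j \<in> {1..<y}" "j \<noteq> x" for j
    using that assms(1,4) by (cases "j < x") (auto simp: prefix_minima_def)
  then have "tau y < tau j" if "j \<in> {1..<y}" for j
    using that assms(3) by (cases "j = x") (auto intro: less_trans)
  then show "y \<in> records tau n"
    using assms(1,2) unfolding records_def prefix_minima_def by auto
  have "w \<notin> records tau n" if "w \<in> {x<..<y}" for w
  proof -
    have "tau x < tau w" "x \<in> {1..<w}" "y \<in> {w<..n}"
      using that assms by (auto simp: prefix_minima_def)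
    moreover from this have "tau y < tau w" using assms(3) by simp
    ultimately show ?thesis unfolding records_def prefix_minima_def suffix_minima_def
      by (force dest: bspec[of _ _ x] bspec[of _ _ y])
  qed
  then show "{x<..<y} \<inter> records tau n = {}" by blast
qed

context
  fixes tau :: "nat \<Rightarrow> nat" and n :: nat
  assumes inj: "inj_on tau {1..n}"
begin

lemma greedy_step_suffix_argmin:
  assumes "x \<in> {1..n}" "m \<in> {x<..n}" "\<forall>w\<in>{x<..n}. tau x \<le> tau w \<and> tau m \<le> tau w"
  shows "greedy_step tau n x = m"
proof (rule greedy_step_eqI)
  have "tau x \<noteq> tau m"
    using assms(1,2) inj_onD[OF inj] by fastforce
  then show "adj tau n x m"
    using assms unfolding adj_def attach_iff by (auto simp: le_less)
  fix z assume "adj tau n x z"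
  show "z \<le> m"
  proof (rule ccontr)
    assume "\<not> z \<le> m"
    then have "tau z \<le> tau m" "z \<in> {x<..n}"
      using adj_between[OF \<open>adj tau n x z\<close>, of m] adj_in_vertices[OF \<open>adj tau n x z\<close>] assms(2)
      by auto
    then have "tau z = tau m" using assms(3) by (simp add: antisym)
    then show False
      using inj_onD[OF inj] \<open>z \<in> {x<..n}\<close> assms(1,2) \<open>\<not> z \<le> m\<close> by fastforce
  qed
qed (use assms in simp)

lemma next_record_suffix_argmin:
  assumes "x \<in> {1..n}" "m \<in> {x<..n}" "\<forall>w\<in>{x<..n}. tau x \<le> tau w \<and> tau m \<le> tau w"
  shows "m \<in> records tau n" "{x<..<m} \<inter> records tau n = {}"
proof -
  have "tau m < tau j" if "j \<in> {m<..n}" for j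
  proof -
    have "tau m \<le> tau j" using that assms(2,3) by auto
    moreover have "tau m \<noteq> tau j" using that assms(1,2) inj_onD[OF inj, of m j] by auto
    ultimately show ?thesis by simp
  qed
  then show "m \<in> records tau n"
    using assms(1,2) unfolding records_def suffix_minima_def by auto
  have "w \<notin> records tau n" if "w \<in> {x<..<m}" for w
  proof -
    have "tau x \<le> tau w" "tau m \<le> tau w" "x \<in> {1..<w}" "m \<in> {w<..n}"
      using that assms by auto
    then show ?thesis unfolding records_def prefix_minima_def suffix_minima_def
      by (force dest: bspec[of _ _ x] bspec[of _ _ m])
  qed
  then show "{x<..<m} \<inter> records tau n = {}" by blast
qed

lemma obtain_first_smaller_after:
  assumes "x \<in> {1..n}" "z \<in> {x<..n}" "tau z < tau x"
  obtains y where "y \<in> {x<..n}" "tau y < tau x" "\<forall>w\<in>{x<..<y}. tau x < tau w"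
proof -
  define y where "y = Min {z\<in>{x<..n}. tau z < tau x}"
  have "y \<in> {z\<in>{x<..n}. tau z < tau x}" unfolding y_def using assms(2,3) by (intro Min_in) auto
  then have y: "y \<in> {x<..n}" "tau y < tau x" by auto
  have "tau x < tau w" if "w \<in> {x<..<y}" for w
  proof -
    have "\<not> tau w < tau x"
    proof
      assume "tau w < tau x"
      then have "y \<le> w" unfolding y_def using that y(1) by (intro Min_le) auto
      then show False using that by simp
    qed
    moreover have "tau w \<noteq> tau x" using that y assms(1) inj_onD[OF inj, of w x] by auto
    ultimately show ?thesis by simp
  qed
  with y that show ?thesis by blast
qed

lemma greedy_step_next_record:
  assumes "x \<in> records tau n" "x < n"
  shows "greedy_step tau n x \<in> records tau n \<and> x < greedy_step tau n x \<and>
    {x<..<greedy_step tau n x} \<inter> records tau n = {}"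
proof -
  have x: "x \<in> {1..n}" using assms(1) records_subset by blast
  show ?thesis
  proof (cases "\<exists>z\<in>{x<..n}. tau z < tau x")
    case True
    then obtain y where y: "y \<in> {x<..n}" "tau y < tau x" "\<forall>w\<in>{x<..<y}. tau x < tau w"
      using obtain_first_smaller_after[OF x] by blast
    have "x \<notin> suffix_minima tau n"
      using True unfolding suffix_minima_def by (blast dest: less_asym)
    then have "x \<in> prefix_minima tau n" using assms(1) unfolding records_def by blast
    then have "greedy_step tau n x = y" "y \<in> records tau n" "{x<..<y} \<inter> records tau n = {}"
      using greedy_step_first_smaller[OF x y] next_record_prefix_minimum[OF _ y] by blast+
    with y show ?thesis by simp
  next
    case False
    obtain m where m: "m \<in> {x<..n}" "\<forall>w\<in>{x<..n}. tau m \<le> tau w"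
      using ex_is_arg_min_if_finite[of "{x<..n}" tau] assms(2)
      unfolding is_arg_min_linorder by auto
    with False have "\<forall>w\<in>{x<..n}. tau x \<le> tau w \<and> tau m \<le> tau w" by (auto simp: not_less)
    then have "greedy_step tau n x = m" "m \<in> records tau n" "{x<..<m} \<inter> records tau n = {}"
      using greedy_step_suffix_argmin[OF x m(1)] next_record_suffix_argmin[OF x m(1)] by blast+
    with m(1) show ?thesis by simp
  qed
qed

lemma greedy_walk_records:
  assumes "n \<ge> 1" "k < card (records tau n)"
  shows "greedy_walk tau n k \<in> records tau n \<and> card {w\<in>records tau n. w < greedy_walk tau n k} = k"
  using assms(2)
proof (induction k)
  case 0
  have "{w\<in>records tau n. w < 1} = {}" using records_subset by fastforce
  then show ?case using first_in_records[OF assms(1)] by (simp add: greedy_walk_def)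
next
  case (Suc k)
  let ?M = "records tau n" and ?x = "greedy_walk tau n k"
  have x: "?x \<in> ?M" "card {w\<in>?M. w < ?x} = k" using Suc by auto
  have "?x \<noteq> n"
  proof
    assume "?x = n"
    then have "\<forall>w\<in>?M. w \<le> ?x" using records_subset by fastforce
    then show False
      using card_less_eq_card_minus_one_iff[OF finite_records x(1)] x(2) Suc.prems by simp
  qed
  then have "?x < n" using x(1) records_subset by fastforce
  note step = greedy_step_next_record[OF x(1) this]
  have "{w\<in>?M. w < greedy_step tau n ?x} = insert ?x {w\<in>?M. w < ?x}"
    using step x(1) by (auto simp: disjoint_iff) (metis linorder_neqE_nat)
  moreover have "card (insert ?x {w\<in>?M. w < ?x}) = Suc k"
    using x finite_records by simp
  moreover have "greedy_walk tau n (Suc k) = greedy_step tau n ?x"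
    using greedy_walk_Suc \<open>?x \<noteq> n\<close> by simp
  ultimately show ?case using step by simp
qed

lemma greedy_steps_eq_card_records:
  assumes "n \<ge> 1"
  shows "greedy_steps tau n = card (records tau n) - 1"
  unfolding greedy_steps_def
proof (rule Least_equality)
  let ?M = "records tau n"
  have "card ?M \<noteq> 0" using last_in_records[OF assms] finite_records by auto
  have reach_n: "greedy_walk tau n k = n \<longleftrightarrow> k = card ?M - 1" if "k < card ?M" for k
  proof -
    have walk: "greedy_walk tau n k \<in> ?M" "card {w\<in>?M. w < greedy_walk tau n k} = k"
      using greedy_walk_records[OF assms that] by auto
    have "greedy_walk tau n k = n \<longleftrightarrow> (\<forall>w\<in>?M. w \<le> greedy_walk tau n k)"
      using walk records_subset last_in_records[OF assms] by fastforce
    also have "\<dots> \<longleftrightarrow> k = card ?M - 1"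
      using card_less_eq_card_minus_one_iff[OF finite_records walk(1)] walk(2) by simp
    finally show ?thesis .
  qed
  show "greedy_walk tau n (card ?M - 1) = n"
    using reach_n \<open>card ?M \<noteq> 0\<close> by simp
  fix k assume "greedy_walk tau n k = n"
  then show "card ?M - 1 \<le> k"
    using reach_n[of k] by (cases "k < card ?M") auto
qed

lemma card_prefix_minima_Int_suffix_minima:
  assumes "n \<ge> 1"
  shows "card (prefix_minima tau n \<inter> suffix_minima tau n) = 1"
proof -
  obtain p where p: "p \<in> {1..n}" "\<forall>j\<in>{1..n}. tau p \<le> tau j"
    using ex_is_arg_min_if_finite[of "{1..n}" tau] assms unfolding is_arg_min_linorder by auto
  have less: "tau p < tau j" if "j \<in> {1..n}" "j \<noteq> p" for j
    using p that inj_onD[OF inj, of p j] by fastforce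
  have "prefix_minima tau n \<inter> suffix_minima tau n = {p}"
  proof (intro equalityI subsetI)
    fix k assume k: "k \<in> prefix_minima tau n \<inter> suffix_minima tau n"
    then have "k \<in> {1..n}" unfolding prefix_minima_def by simp
    show "k \<in> {p}"
    proof (rule ccontr)
      assume "k \<notin> {p}"
      then have "tau k < tau p"
        using k p(1) unfolding prefix_minima_def suffix_minima_def by (cases "k < p") auto
      then show False using p(2) \<open>k \<in> {1..n}\<close> by (simp add: leD)
    qed
  qed (use p less in \<open>auto simp: prefix_minima_def suffix_minima_def\<close>)
  then show ?thesis by simp
qed

lemma greedy_steps_eq_card_minima:
  assumes "n \<ge> 1"
  shows "greedy_steps tau n + 2 = card (prefix_minima tau n) + card (suffix_minima tau n)"
proof -
  have "finite (prefix_minima tau n)" "finite (suffix_minima tau n)"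
    unfolding prefix_minima_def suffix_minima_def by simp_all
  then have "card (records tau n) + 1 = card (prefix_minima tau n) + card (suffix_minima tau n)"
    using card_Un_Int card_prefix_minima_Int_suffix_minima[OF assms] unfolding records_def by metis
  moreover have "card (records tau n) \<ge> 1"
    using last_in_records[OF assms] finite_records by (simp add: Suc_le_eq card_gt_0_iff) blast
  ultimately show ?thesis using greedy_steps_eq_card_records[OF assms] by simp
qed

end

section \<open>Generating function of the number of minima\<close>

definition extend_perm :: "nat \<Rightarrow> (nat \<Rightarrow> nat) \<Rightarrow> nat \<Rightarrow> nat \<Rightarrow> nat" where
  "extend_perm n p b k =
     (if k \<in> {1..n} then (if b \<le> p k then p k + 1 else p k) else if k = Suc n then b else k)"

lemma extend_perm_less_iff:
  "j \<in> {1..n} \<Longrightarrow> k \<in> {1..n} \<Longrightarrow> extend_perm n p b j < extend_perm n p b k \<longleftrightarrow> p j < p k"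
  unfolding extend_perm_def by auto

lemma extend_perm_permutes:
  assumes p: "p permutes {1..n}" and b: "b \<in> {1..Suc n}"
  shows "extend_perm n p b permutes {1..Suc n}"
proof -
  let ?t = "extend_perm n p b"
  have t_in: "?t k \<in> {1..Suc n} - {b}" if "k \<in> {1..n}" for k
  proof -
    have "p k \<in> {1..n}" using permutes_in_image[OF p] that by simp
    then show ?thesis using that by (auto simp: extend_perm_def)
  qed
  have "inj_on ?t {1..n}"
  proof (rule inj_onI)
    fix j k assume jk: "j \<in> {1..n}" "k \<in> {1..n}" "?t j = ?t k"
    then have "\<not> p j < p k" "\<not> p k < p j"
      using extend_perm_less_iff[of j n k p b] extend_perm_less_iff[of k n j p b] by auto
    then have "p j = p k" by simp
    then show "j = k" using jk permutes_inj_on[OF p] by (auto dest: inj_onD)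
  qed
  moreover have ins: "{1..Suc n} = insert (Suc n) {1..n}" and last: "?t (Suc n) = b"
    by (auto simp: extend_perm_def)
  moreover have "b \<notin> ?t ` {1..n}"
  proof
    assume "b \<in> ?t ` {1..n}"
    then obtain k where "k \<in> {1..n}" "b = ?t k" by blast
    with t_in[of k] show False by simp
  qed
  ultimately have "inj_on ?t {1..Suc n}"
    unfolding ins inj_on_insert by simp
  moreover have "?t ` {1..Suc n} \<subseteq> {1..Suc n}"
  proof (rule image_subsetI)
    fix k assume "k \<in> {1..Suc n}"
    then show "?t k \<in> {1..Suc n}" using t_in[of k] last b by (cases "k = Suc n") auto
  qed
  ultimately have "bij_betw ?t {1..Suc n} {1..Suc n}"
    by (simp add: bij_betw_def endo_inj_surj)
  then show ?thesis by (rule bij_imp_permutes) (auto simp: extend_perm_def)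
qed

lemma extend_perm_eqD:
  assumes "p permutes {1..n}" "q permutes {1..n}" "extend_perm n p b = extend_perm n q c"
  shows "p = q \<and> b = c"
proof -
  have "b = c" using fun_cong[OF assms(3), of "Suc n"] by (simp add: extend_perm_def)
  moreover have "p k = q k" for k
    using fun_cong[OF assms(3), of k] \<open>b = c\<close> permutes_not_in[OF assms(1)] permutes_not_in[OF assms(2)]
    by (cases "k \<in> {1..n}") (auto simp: extend_perm_def split: if_splits)
  ultimately show ?thesis by auto
qed

lemma bij_betw_extend_perm:
  "bij_betw (\<lambda>(p, b). extend_perm n p b) ({p. p permutes {1..n}} \<times> {1..Suc n})
     {t. t permutes {1..Suc n}}"
proof -
  let ?f = "\<lambda>(p, b). extend_perm n p b" and ?A = "{p. p permutes {1..n}} \<times> {1..Suc n}"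
  have inj: "inj_on ?f ?A"
  proof (rule inj_onI)
    fix u v assume "u \<in> ?A" "v \<in> ?A" "?f u = ?f v"
    then show "u = v" using extend_perm_eqD[of "fst u" n "fst v" "snd u" "snd v"]
      by (simp add: split_beta prod_eq_iff mem_Times_iff)
  qed
  have "?f ` ?A = {t. t permutes {1..Suc n}}"
  proof (rule card_subset_eq)
    show "finite {t. t permutes {1..Suc n}}" by (simp add: finite_permutations)
    show "?f ` ?A \<subseteq> {t. t permutes {1..Suc n}}"
    proof (rule image_subsetI)
      fix u assume "u \<in> ?A"
      then show "?f u \<in> {t. t permutes {1..Suc n}}"
        using extend_perm_permutes[of "fst u" n "snd u"] by (simp add: split_beta mem_Times_iff)
    qed
    show "card (?f ` ?A) = card {t. t permutes {1..Suc n}}"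
      using card_image[OF inj] by (simp add: card_cartesian_product card_permutations)
  qed
  with inj show ?thesis unfolding bij_betw_def by simp
qed

lemma prefix_minima_Suc:
  "prefix_minima t (Suc n) =
     prefix_minima t n \<union> (if \<forall>j\<in>{1..n}. t (Suc n) < t j then {Suc n} else {})"
  unfolding prefix_minima_def by (auto simp: le_Suc_eq)

lemma prefix_minima_cong:
  assumes "\<And>j k. j \<in> {1..n} \<Longrightarrow> k \<in> {1..n} \<Longrightarrow> s j < s k \<longleftrightarrow> t j < t k"
  shows "prefix_minima s n = prefix_minima t n"
  unfolding prefix_minima_def using assms by auto

lemma card_prefix_minima_extend_perm:
  assumes p: "p permutes {1..n}" and b: "b \<in> {1..Suc n}"
  shows "card (prefix_minima (extend_perm n p b) (Suc n)) =
    card (prefix_minima p n) + (if b = 1 then 1 else 0)"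
proof -
  let ?t = "extend_perm n p b"
  have "(\<forall>j\<in>{1..n}. ?t (Suc n) < ?t j) \<longleftrightarrow> b = 1"
  proof
    assume "b = 1"
    show "\<forall>j\<in>{1..n}. ?t (Suc n) < ?t j"
    proof
      fix j assume j: "j \<in> {1..n}"
      then have "p j \<in> {1..n}" using permutes_in_image[OF p] by simp
      then show "?t (Suc n) < ?t j" using \<open>b = 1\<close> j by (simp add: extend_perm_def)
    qed
  next
    assume min: "\<forall>j\<in>{1..n}. ?t (Suc n) < ?t j"
    show "b = 1"
    proof (rule ccontr)
      assume "b \<noteq> 1"
      then have "b - 1 \<in> p ` {1..n}" using b permutes_image[OF p] by auto
      then obtain j where "j \<in> {1..n}" "p j = b - 1" by auto
      moreover from this have "?t (Suc n) < ?t j" using min by blast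
      ultimately show False using \<open>b \<noteq> 1\<close> b by (auto simp: extend_perm_def split: if_splits)
    qed
  qed
  moreover have "prefix_minima ?t n = prefix_minima p n"
    by (intro prefix_minima_cong extend_perm_less_iff)
  moreover have "finite (prefix_minima p n)" "Suc n \<notin> prefix_minima p n"
    unfolding prefix_minima_def by auto
  ultimately show ?thesis by (simp add: prefix_minima_Suc)
qed

lemma sum_pow_card_prefix_minima:
  fixes x :: "'a::comm_semiring_1"
  shows "(\<Sum>t | t permutes {1..n}. x ^ card (prefix_minima t n)) = pochhammer x n"
proof (induction n)
  case 0
  then show ?case by (simp add: prefix_minima_def)
next
  case (Suc n)
  let ?P = "{p. p permutes {1..n}}"
  have "(\<Sum>t | t permutes {1..Suc n}. x ^ card (prefix_minima t (Suc n)))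
      = (\<Sum>(p, b)\<in>?P \<times> {1..Suc n}. x ^ card (prefix_minima (extend_perm n p b) (Suc n)))"
    using sum.reindex_bij_betw[OF bij_betw_extend_perm,
        of "\<lambda>t. x ^ card (prefix_minima t (Suc n))"] by (simp add: split_def)
  also have "\<dots> = (\<Sum>p\<in>?P. \<Sum>b\<in>{1..Suc n}. x ^ card (prefix_minima p n) * (if b = 1 then x else 1))"
    unfolding sum.cartesian_product[symmetric]
    by (intro sum.cong refl) (auto simp: card_prefix_minima_extend_perm mult.commute)
  also have "\<dots> = (\<Sum>p\<in>?P. x ^ card (prefix_minima p n)) * (x + of_nat n)"
  proof -
    have "{1..Suc n} = insert 1 {2..Suc n}" by auto
    then have "(\<Sum>b\<in>{1..Suc n}. if b = 1 then x else 1) = x + of_nat n" by simp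
    then show ?thesis by (simp add: sum_distrib_right flip: sum_distrib_left)
  qed
  also have "\<dots> = pochhammer x (Suc n)"
    using Suc by (simp add: pochhammer_Suc)
  finally show ?case .
qed

definition reverse_pos :: "nat \<Rightarrow> nat \<Rightarrow> nat" where
  "reverse_pos n k = (if k \<in> {1..n} then Suc n - k else k)"

lemma reverse_pos_reverse_pos [simp]: "reverse_pos n (reverse_pos n k) = k"
  unfolding reverse_pos_def by auto

lemma reverse_pos_permutes: "reverse_pos n permutes {1..n}"
  by (rule bij_imp_permutes[OF bij_betw_byWitness[where f' = "reverse_pos n"]])
    (auto simp: reverse_pos_def)

lemma ball_reflect_interval:
  "(\<forall>j\<in>{1..<Suc n - k}. P (Suc n - j)) \<longleftrightarrow> (\<forall>i\<in>{k<..n}. P i)"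
proof
  assume *: "\<forall>j\<in>{1..<Suc n - k}. P (Suc n - j)"
  show "\<forall>i\<in>{k<..n}. P i"
  proof
    fix i assume "i \<in> {k<..n}"
    then have "Suc n - i \<in> {1..<Suc n - k}" by auto
    with * have "P (Suc n - (Suc n - i))" by blast
    then show "P i" using \<open>i \<in> {k<..n}\<close> by simp
  qed
next
  assume *: "\<forall>i\<in>{k<..n}. P i"
  show "\<forall>j\<in>{1..<Suc n - k}. P (Suc n - j)"
  proof
    fix j assume "j \<in> {1..<Suc n - k}"
    then have "Suc n - j \<in> {k<..n}" by auto
    with * show "P (Suc n - j)" by blast
  qed
qed

lemma reverse_pos_in_prefix_minima_iff:
  "reverse_pos n k \<in> prefix_minima (t \<circ> reverse_pos n) n \<longleftrightarrow> k \<in> suffix_minima t n"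
proof (cases "k \<in> {1..n}")
  case True
  have "j \<in> {1..<Suc n - k} \<Longrightarrow> reverse_pos n j = Suc n - j" for j
    using True unfolding reverse_pos_def by auto
  moreover have "reverse_pos n k = Suc n - k" "Suc n - k \<in> {1..n}"
    using True unfolding reverse_pos_def by auto
  ultimately show ?thesis
    using True ball_reflect_interval[of n k "\<lambda>i. t k < t i"]
    unfolding prefix_minima_def suffix_minima_def mem_Collect_eq comp_def reverse_pos_reverse_pos
    by simp
next
  case False
  then have "reverse_pos n k = k" unfolding reverse_pos_def by auto
  with False show ?thesis by (auto simp: prefix_minima_def suffix_minima_def)
qed

lemma card_suffix_minima:
  "card (suffix_minima t n) = card (prefix_minima (t \<circ> reverse_pos n) n)"
proof -
  have "suffix_minima t n = reverse_pos n -` prefix_minima (t \<circ> reverse_pos n) n"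
    using reverse_pos_in_prefix_minima_iff by blast
  moreover have "inj (reverse_pos n)" "surj (reverse_pos n)"
    by (metis injI reverse_pos_reverse_pos, metis surjI reverse_pos_reverse_pos)
  ultimately show ?thesis by (simp add: card_vimage_inj)
qed

lemma sum_pow_card_suffix_minima:
  fixes x :: "'a::comm_semiring_1"
  shows "(\<Sum>t | t permutes {1..n}. x ^ card (suffix_minima t n)) = pochhammer x n"
proof -
  have "(\<Sum>t | t permutes {1..n}. x ^ card (suffix_minima t n)) =
      (\<Sum>t | t permutes {1..n}. x ^ card (prefix_minima (t \<circ> reverse_pos n) n))"
    by (simp only: card_suffix_minima)
  also have "\<dots> = (\<Sum>t | t permutes {1..n}. x ^ card (prefix_minima t n))"
    by (rule sum_permutations_compose_right[OF reverse_pos_permutes, symmetric])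
  also have "\<dots> = pochhammer x n"
    by (rule sum_pow_card_prefix_minima)
  finally show ?thesis .
qed

section \<open>Concentration\<close>

lemma finite_permutations_atLeastAtMost: "finite {t. t permutes {1..n::nat}}"
  by (simp add: finite_permutations)

lemma perm_prob_eq: "perm_prob n P = real (card {t. t permutes {1..n} \<and> P t}) / fact n"
  unfolding perm_prob_def by (simp add: card_permutations)

lemma perm_prob_nonneg: "0 \<le> perm_prob n P"
  unfolding perm_prob_def by simp

lemma perm_prob_True: "perm_prob n (\<lambda>_. True) = 1"
  unfolding perm_prob_eq by (simp add: card_permutations)

lemma perm_prob_mono:
  assumes "\<And>t. t permutes {1..n} \<Longrightarrow> P t \<Longrightarrow> Q t"
  shows "perm_prob n P \<le> perm_prob n Q"
proof -
  have "card {t. t permutes {1..n} \<and> P t} \<le> card {t. t permutes {1..n} \<and> Q t}"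
    using assms by (intro card_mono) (auto intro: finite_subset[OF _ finite_permutations_atLeastAtMost])
  then show ?thesis unfolding perm_prob_eq by (simp add: divide_right_mono)
qed

lemma perm_prob_disj_le: "perm_prob n (\<lambda>t. P t \<or> Q t) \<le> perm_prob n P + perm_prob n Q"
proof -
  have "{t. t permutes {1..n} \<and> (P t \<or> Q t)} =
      {t. t permutes {1..n} \<and> P t} \<union> {t. t permutes {1..n} \<and> Q t}" by auto
  then have "card {t. t permutes {1..n} \<and> (P t \<or> Q t)} \<le>
      card {t. t permutes {1..n} \<and> P t} + card {t. t permutes {1..n} \<and> Q t}"
    by (simp add: card_Un_le)
  then show ?thesis unfolding perm_prob_eq add_divide_distrib[symmetric]
    by (intro divide_right_mono) (simp_all flip: of_nat_add)
qed

lemma perm_prob_markov: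
  fixes g :: "(nat \<Rightarrow> nat) \<Rightarrow> real"
  assumes "c > 0" "\<And>t. 0 \<le> g t"
  shows "perm_prob n (\<lambda>t. c \<le> g t) \<le> (\<Sum>t | t permutes {1..n}. g t) / (c * fact n)"
proof -
  let ?B = "{t. t permutes {1..n} \<and> c \<le> g t}"
  have "c * card ?B = (\<Sum>t\<in>?B. c)" by simp
  also have "\<dots> \<le> (\<Sum>t\<in>?B. g t)" by (rule sum_mono) simp
  also have "\<dots> \<le> (\<Sum>t | t permutes {1..n}. g t)"
    using assms(2) by (intro sum_mono2 finite_permutations_atLeastAtMost) auto
  finally show ?thesis
    unfolding perm_prob_eq using assms(1) by (simp add: field_simps)
qed

lemma perm_prob_tendsto_one:
  assumes bad: "(\<lambda>n. perm_prob n (B n)) \<longlonglongrightarrow> 0"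
    and good: "eventually (\<lambda>n. \<forall>t. t permutes {1..n} \<longrightarrow> \<not> B n t \<longrightarrow> G n t) sequentially"
  shows "(\<lambda>n. perm_prob n (G n)) \<longlonglongrightarrow> 1"
proof (rule tendsto_sandwich[OF _ _ _ tendsto_const])
  show "eventually (\<lambda>n. 1 - perm_prob n (B n) \<le> perm_prob n (G n)) sequentially"
    using good
  proof eventually_elim
    case (elim n)
    then have "perm_prob n (\<lambda>_. True) \<le> perm_prob n (\<lambda>t. G n t \<or> B n t)"
      by (intro perm_prob_mono) blast
    then show ?case using perm_prob_disj_le[of n "G n" "B n"] by (simp add: perm_prob_True)
  qed
  show "eventually (\<lambda>n. perm_prob n (G n) \<le> 1) sequentially"
    using perm_prob_mono[of _ _ "\<lambda>_. True"] by (simp add: perm_prob_True)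
  show "(\<lambda>n. 1 - perm_prob n (B n)) \<longlonglongrightarrow> 1"
    using tendsto_diff[OF tendsto_const bad, of 1] by simp
qed

lemma pochhammer_le_fact_mult_exp_harm:
  fixes x :: real
  assumes "0 \<le> x"
  shows "pochhammer x n \<le> fact n * exp ((x - 1) * harm n)"
proof (induction n)
  case 0
  then show ?case by (simp add: harm_def)
next
  case (Suc n)
  have "x + real n = real (Suc n) * (1 + (x - 1) / real (Suc n))"
    by (simp add: field_simps)
  also have "\<dots> \<le> real (Suc n) * exp ((x - 1) / real (Suc n))"
    by (intro mult_left_mono exp_ge_add_one_self) simp_all
  finally have "pochhammer x n * (x + real n) \<le>
      (fact n * exp ((x - 1) * harm n)) * (real (Suc n) * exp ((x - 1) / real (Suc n)))"
    using Suc assms by (intro mult_mono) (simp_all add: pochhammer_nonneg)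
  also have "\<dots> = fact (Suc n) * exp ((x - 1) * harm (Suc n))"
    by (simp add: harm_Suc field_simps exp_add[symmetric])
  finally show ?case by (simp add: pochhammer_Suc)
qed

lemma ln_le_harm_nat: "ln (real n) \<le> harm n"
proof (cases "n = 0")
  case False
  then have "ln (real n) \<le> ln (real n + 1)" by simp
  also have "\<dots> \<le> harm n" by (rule ln_le_harm)
  finally show ?thesis .
qed (simp add: harm_def)

lemma harm_le_ln_plus_one: "harm n \<le> ln (real n) + 1"
proof (cases "n = 0")
  case False
  then have "harm n - ln (real n) \<le> harm 1 - ln (real 1)"
    by (intro euler_mascheroni_sequence_decreasing) auto
  then show ?thesis by (simp add: harm_def)
qed (simp add: harm_def)

lemma mult_harm_le_mult_ln_plus_abs:
  fixes x :: real
  shows "(x - 1) * harm n \<le> (x - 1) * ln (real n) + \<bar>x - 1\<bar>"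
proof (cases "1 \<le> x")
  case True
  then have "(x - 1) * harm n \<le> (x - 1) * (ln (real n) + 1)"
    using harm_le_ln_plus_one by (intro mult_left_mono) auto
  with True show ?thesis by (simp add: algebra_simps)
next
  case False
  then have "(x - 1) * harm n \<le> (x - 1) * ln (real n)"
    using ln_le_harm_nat by (intro mult_left_mono_neg) auto
  then show ?thesis by simp
qed

lemma ln_less_minus_one:
  fixes x :: real
  assumes "0 < x" "x \<noteq> 1"
  shows "ln x < x - 1"
proof -
  have "ln x = 2 * ln (sqrt x)"
    using assms by (simp add: ln_sqrt)
  also have "\<dots> \<le> 2 * (sqrt x - 1)"
    using ln_le_minus_one[of "sqrt x"] assms by simp
  also have "\<dots> < x - 1"
  proof -
    have "sqrt x \<noteq> 1" using assms by simp
    then have "0 < (sqrt x - 1)\<^sup>2" by simp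
    then show ?thesis using assms by (simp add: power2_eq_square algebra_simps)
  qed
  finally show ?thesis .
qed

lemma mult_ln_self_minus_self_plus_one_pos:
  fixes x :: real
  assumes "0 < x" "x \<noteq> 1"
  shows "0 < x * ln x - x + 1"
proof -
  have "ln (1 / x) < 1 / x - 1" using assms by (intro ln_less_minus_one) auto
  then have "0 < x * (1 / x - 1 - ln (1 / x))" using assms by simp
  then show ?thesis using assms by (simp add: ln_div algebra_simps)
qed

lemma pochhammer_statistic_tail:
  fixes f :: "nat \<Rightarrow> (nat \<Rightarrow> nat) \<Rightarrow> nat" and \<beta> :: real
  assumes gen: "\<And>n. (\<Sum>t | t permutes {1..n}. \<beta> ^ f n t) = pochhammer \<beta> n"
    and \<beta>: "0 < \<beta>" "\<beta> \<noteq> 1"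
  shows "(\<lambda>n. perm_prob n (\<lambda>t. \<beta> powr (\<beta> * ln (real n)) \<le> \<beta> ^ f n t)) \<longlonglongrightarrow> 0"
proof -
  \<comment> \<open>the large deviation rate of a Poisson variable at \<beta> times its mean\<close>
  define c where "c = \<beta> * ln \<beta> - \<beta> + 1"
  have "0 < c" unfolding c_def using \<beta> by (rule mult_ln_self_minus_self_plus_one_pos)
  have bound: "perm_prob n (\<lambda>t. \<beta> powr (\<beta> * ln (real n)) \<le> \<beta> ^ f n t)
      \<le> exp \<bar>\<beta> - 1\<bar> * real n powr - c" if "n \<ge> 1" for n
  proof -
    let ?a = "\<beta> powr (\<beta> * ln (real n))"
    have a: "?a = exp (\<beta> * ln \<beta> * ln (real n))" using \<beta> by (simp add: powr_def)
    have "perm_prob n (\<lambda>t. ?a \<le> \<beta> ^ f n t) \<le> pochhammer \<beta> n / (?a * fact n)"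
      using perm_prob_markov[of ?a "\<lambda>t. \<beta> ^ f n t" n] gen \<beta> by simp
    also have "\<dots> \<le> exp ((\<beta> - 1) * harm n) / ?a"
      using pochhammer_le_fact_mult_exp_harm[of \<beta> n] \<beta> by (simp add: field_simps)
    also have "\<dots> \<le> exp (\<bar>\<beta> - 1\<bar> + (\<beta> - 1) * ln (real n)) / ?a"
      using mult_harm_le_mult_ln_plus_abs[of \<beta> n] by (intro divide_right_mono) auto
    also have "\<dots> = exp \<bar>\<beta> - 1\<bar> * exp (- c * ln (real n))"
      unfolding a c_def by (simp add: exp_add[symmetric] exp_diff[symmetric] algebra_simps)
    also have "\<dots> = exp \<bar>\<beta> - 1\<bar> * real n powr - c"
      using that by (simp add: powr_def)
    finally show ?thesis .
  qed
  have "(\<lambda>n. exp \<bar>\<beta> - 1\<bar> * real n powr - c) \<longlonglongrightarrow> 0"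
    using \<open>0 < c\<close> by (intro tendsto_mult_right_zero tendsto_neg_powr filterlim_real_sequentially) auto
  then show ?thesis
  proof (rule tendsto_sandwich[OF _ _ tendsto_const, rotated 2])
    show "eventually (\<lambda>n. 0 \<le> perm_prob n (\<lambda>t. \<beta> powr (\<beta> * ln (real n)) \<le> \<beta> ^ f n t)) sequentially"
      by (simp add: perm_prob_nonneg)
    show "eventually (\<lambda>n. perm_prob n (\<lambda>t. \<beta> powr (\<beta> * ln (real n)) \<le> \<beta> ^ f n t)
        \<le> exp \<bar>\<beta> - 1\<bar> * real n powr - c) sequentially"
      using eventually_ge_at_top[of 1] by eventually_elim (rule bound)
  qed
qed

lemma powr_le_power_if_deviation:
  fixes e a :: real
  assumes "0 < e" "e < 1" "e * a \<le> \<bar>real k - a\<bar>"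
  shows "(1 + e) powr ((1 + e) * a) \<le> (1 + e) ^ k \<or> (1 - e) powr ((1 - e) * a) \<le> (1 - e) ^ k"
proof -
  consider "(1 + e) * a \<le> real k" | "real k \<le> (1 - e) * a"
    using assms(3) by (auto simp: abs_if algebra_simps split: if_splits)
  then show ?thesis
  proof cases
    case 1
    then have "(1 + e) powr ((1 + e) * a) \<le> (1 + e) powr real k"
      using assms by (intro powr_mono) auto
    also have "\<dots> = (1 + e) ^ k" using assms by (simp add: powr_realpow)
    finally show ?thesis ..
  next
    case 2
    then have "(1 - e) powr ((1 - e) * a) \<le> (1 - e) powr real k"
      using assms by (intro powr_mono') auto
    also have "\<dots> = (1 - e) ^ k" using assms by (simp add: powr_realpow)
    finally show ?thesis ..
  qed
qed

lemma pochhammer_statistic_concentrated: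
  fixes f :: "nat \<Rightarrow> (nat \<Rightarrow> nat) \<Rightarrow> nat" and d :: real
  assumes gen: "\<And>n (x :: real). (\<Sum>t | t permutes {1..n}. x ^ f n t) = pochhammer x n"
    and "0 < d"
  shows "(\<lambda>n. perm_prob n (\<lambda>t. d * ln (real n) \<le> \<bar>real (f n t) - ln (real n)\<bar>)) \<longlonglongrightarrow> 0"
proof -
  \<comment> \<open>capping e keeps the base 1 - e of the lower tail positive\<close>
  define e where "e = min d (1 / 2)"
  have e: "0 < e" "e < 1" "e \<le> d" using \<open>0 < d\<close> by (auto simp: e_def)
  let ?up = "\<lambda>n t. (1 + e) powr ((1 + e) * ln (real n)) \<le> (1 + e) ^ f n t"
  let ?low = "\<lambda>n t. (1 - e) powr ((1 - e) * ln (real n)) \<le> (1 - e) ^ f n t"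
  have "(\<lambda>n. perm_prob n (?up n)) \<longlonglongrightarrow> 0" "(\<lambda>n. perm_prob n (?low n)) \<longlonglongrightarrow> 0"
    using e by (intro pochhammer_statistic_tail gen; simp)+
  from tendsto_add[OF this] have tails: "(\<lambda>n. perm_prob n (?up n) + perm_prob n (?low n)) \<longlonglongrightarrow> 0"
    by simp
  have bound: "perm_prob n (\<lambda>t. d * ln (real n) \<le> \<bar>real (f n t) - ln (real n)\<bar>)
      \<le> perm_prob n (?up n) + perm_prob n (?low n)" for n
  proof -
    have "0 \<le> ln (real n)" by (cases n) auto
    have "perm_prob n (\<lambda>t. d * ln (real n) \<le> \<bar>real (f n t) - ln (real n)\<bar>)
        \<le> perm_prob n (\<lambda>t. ?up n t \<or> ?low n t)"
    proof (rule perm_prob_mono)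
      fix t assume "d * ln (real n) \<le> \<bar>real (f n t) - ln (real n)\<bar>"
      moreover have "e * ln (real n) \<le> d * ln (real n)"
        using e \<open>0 \<le> ln (real n)\<close> by (intro mult_right_mono) auto
      ultimately show "?up n t \<or> ?low n t"
        using e by (intro powr_le_power_if_deviation) auto
    qed
    also have "\<dots> \<le> perm_prob n (?up n) + perm_prob n (?low n)"
      by (rule perm_prob_disj_le)
    finally show ?thesis .
  qed
  show ?thesis
    by (rule tendsto_sandwich[OF _ _ tendsto_const tails]) (simp_all add: perm_prob_nonneg bound)
qed

lemma prefix_suffix_minima_concentrated:
  fixes d :: real
  assumes "0 < d"
  shows "(\<lambda>n. perm_prob n (\<lambda>t.
      d * ln (real n) \<le> \<bar>real (card (prefix_minima t n)) - ln (real n)\<bar> \<or>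
      d * ln (real n) \<le> \<bar>real (card (suffix_minima t n)) - ln (real n)\<bar>)) \<longlonglongrightarrow> 0"
proof (rule tendsto_sandwich[OF _ _ tendsto_const])
  let ?devL = "\<lambda>n t. d * ln (real n) \<le> \<bar>real (card (prefix_minima t n)) - ln (real n)\<bar>"
  let ?devR = "\<lambda>n t. d * ln (real n) \<le> \<bar>real (card (suffix_minima t n)) - ln (real n)\<bar>"
  show "(\<lambda>n. perm_prob n (?devL n) + perm_prob n (?devR n)) \<longlonglongrightarrow> 0"
    using tendsto_add[OF pochhammer_statistic_concentrated[OF sum_pow_card_prefix_minima assms]
        pochhammer_statistic_concentrated[OF sum_pow_card_suffix_minima assms]] by simp
  show "eventually (\<lambda>n. perm_prob n (\<lambda>t. ?devL n t \<or> ?devR n t)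
      \<le> perm_prob n (?devL n) + perm_prob n (?devR n)) sequentially"
    by (simp add: perm_prob_disj_le)
qed (simp add: perm_prob_nonneg)

lemma greedy_steps_bounds:
  fixes d :: real
  assumes "inj_on tau {1..n}" "n \<ge> 1" "1 \<le> d * ln (real n)"
    and "\<bar>real (card (prefix_minima tau n)) - ln (real n)\<bar> < d * ln (real n)"
    and "\<bar>real (card (suffix_minima tau n)) - ln (real n)\<bar> < d * ln (real n)"
  shows "(2 - 4 * d) * ln (real n) \<le> real (greedy_steps tau n) \<and>
    real (greedy_steps tau n) \<le> (2 + 4 * d) * ln (real n)"
proof -
  let ?L = "real (card (prefix_minima tau n))" and ?R = "real (card (suffix_minima tau n))"
  have "real (greedy_steps tau n) + 2 = ?L + ?R"
    using greedy_steps_eq_card_minima[OF assms(1,2)] by linarith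
  moreover have "2 * ln (real n) - 2 * (d * ln (real n)) < ?L + ?R"
    "?L + ?R < 2 * ln (real n) + 2 * (d * ln (real n))"
    using assms(4,5) unfolding abs_less_iff by linarith+
  moreover have "(2 - 4 * d) * ln (real n) = 2 * ln (real n) - 4 * (d * ln (real n))"
    "(2 + 4 * d) * ln (real n) = 2 * ln (real n) + 4 * (d * ln (real n))"
    by (simp_all add: algebra_simps)
  ultimately show ?thesis using assms(3) by (intro conjI; linarith)
qed

theorem corollary2:
  fixes \<epsilon> :: real
  assumes "\<epsilon> > 0"
  shows "(\<lambda>n. perm_prob n (\<lambda>tau.
            (2 - \<epsilon>) * ln (real n) \<le> real (greedy_steps tau n) \<and>
            real (greedy_steps tau n) \<le> (2 + \<epsilon>) * ln (real n)))
         \<longlonglongrightarrow> 1"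
proof (rule perm_prob_tendsto_one[OF prefix_suffix_minima_concentrated])
  define d where "d = \<epsilon> / 4"
  show "0 < d" using assms by (simp add: d_def)
  have "filterlim (\<lambda>n. ln (real n)) at_top sequentially"
    by (rule filterlim_compose[OF ln_at_top filterlim_real_sequentially])
  then have "eventually (\<lambda>n. 1 / d \<le> ln (real n)) sequentially"
    by (simp add: filterlim_at_top)
  then show "eventually (\<lambda>n. \<forall>t. t permutes {1..n} \<longrightarrow>
      \<not> (d * ln (real n) \<le> \<bar>real (card (prefix_minima t n)) - ln (real n)\<bar> \<or>
         d * ln (real n) \<le> \<bar>real (card (suffix_minima t n)) - ln (real n)\<bar>) \<longrightarrow>
      (2 - \<epsilon>) * ln (real n) \<le> real (greedy_steps t n) \<and>
      real (greedy_steps t n) \<le> (2 + \<epsilon>) * ln (real n)) sequentially"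
    using eventually_ge_at_top[of 1]
  proof eventually_elim
    case (elim n)
    then have "1 \<le> d * ln (real n)" using \<open>0 < d\<close> by (simp add: field_simps)
    moreover have "\<epsilon> = 4 * d" by (simp add: d_def)
    ultimately show ?case
      using greedy_steps_bounds[OF permutes_inj_on elim(2)] by (auto simp: not_le)
  qed
qed

end
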